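(* Let $E,H$ be finite directed graphs and $\xi^0,\xi^1:H\to E$ an embedding pair. Then the associated self-similar groupoid action $(G_\xi,E)$ is contracting and regular.
   Context: Graph paths: finite paths $\mu_1\cdots\mu_n$ with $s(\mu_i)=r(\mu_{i+1})$; $E^k$ paths of length $k$; $vE^*$ paths with range $v$. Embedding pair: injective graph homomorphisms $\xi^0,\xi^1:H\to E$ with $\xi^0|_{H^0}=\xi^1|_{H^0}$ and $\xi^0(H^1)\cap\xi^1(H^1)=\emptyset$; $H^1_\xi=\xi^0(H^1)\cup\xi^1(H^1)$. On the group bundle $\mathbb{Z}\times E^0$ ($(m,v)(n,v)=(m+n,v)$, domain = codomain $=v$) define for $e\in vE^1$: if $e\notin H^1_\xi$, $(m,v)\cdot e=e$, $(m,v)|_e=(0,s(e))$; if $e=\xi^i(h)$, $h\in H^1$, writing $m+i=2n+j$ with $j\in\{0,1\}$, $n\in\mathbb{Z}$: $(m,v)\cdot e=\xi^j(h)$, $(m,v)|_e=(n,s(e))$; extend to paths by $g\cdot(e\nu)=(g\cdot e)(g|_e\cdot\nu)$, $g|_{e\nu}=(g|_e)|_\nu$. $G_\xi$ is the quotient of $\mathbb{Z}\times E^0$ by elements acting trivially on $E^*$; $(G_\xi,E)$ is a faithful self-similar groupoid action. Contracting: there is a finite $F\subseteq G_\xi$ such that for every $g$ there is $n\ge0$ with $g|_\mu\in F$ for all $\mu\in d(g)E^k$, $k\ge n$. Regular: for every $g$ there is $K\in\mathbb{N}$ such that $g\cdot\mu=\mu$ and $|\mu|\ge K$ imply $g|_\mu$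 is the unit at $s(\mu)$. *)

theory Defs
  imports Main
begin

record ('v, 'e) dgraph =
  verts :: "'v set"
  edges :: "'e set"
  rng   :: "'e \<Rightarrow> 'v"
  src   :: "'e \<Rightarrow> 'v"

definition finite_dgraph :: "('v, 'e) dgraph \<Rightarrow> bool" where
  "finite_dgraph G \<longleftrightarrow> finite (verts G) \<and> finite (edges G) \<and>
     (\<forall>e\<in>edges G. rng G e \<in> verts G \<and> src G e \<in> verts G)"

definition graph_hom ::
  "('hv, 'he) dgraph \<Rightarrow> ('v, 'e) dgraph \<Rightarrow> ('hv \<Rightarrow> 'v) \<Rightarrow> ('he \<Rightarrow> 'e) \<Rightarrow> bool" where
  "graph_hom H E \<phi> \<psi> \<longleftrightarrow>
     (\<forall>w\<in>verts H. \<phi> w \<in> verts E) \<and>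
     (\<forall>h\<in>edges H. \<psi> h \<in> edges E \<and> rng E (\<psi> h) = \<phi> (rng H h) \<and> src E (\<psi> h) = \<phi> (src H h))"

definition inj_graph_hom ::
  "('hv, 'he) dgraph \<Rightarrow> ('v, 'e) dgraph \<Rightarrow> ('hv \<Rightarrow> 'v) \<Rightarrow> ('he \<Rightarrow> 'e) \<Rightarrow> bool" where
  "inj_graph_hom H E \<phi> \<psi> \<longleftrightarrow> graph_hom H E \<phi> \<psi> \<and> inj_on \<phi> (verts H) \<and> inj_on \<psi> (edges H)"

text \<open>Embedding pair: \<xi>^0 = (\<phi>, x0), \<xi>^1 = (\<phi>, x1); they agree on vertices (common map \<phi>)
  and have disjoint edge images.\<close>
definition embedding_pair ::
  "('hv, 'he) dgraph \<Rightarrow> ('v, 'e) dgraph \<Rightarrow> ('hv \<Rightarrow> 'v) \<Rightarrow> ('he \<Rightarrow> 'e) \<Rightarrow> ('he \<Rightarrow> 'e) \<Rightarrow> bool" where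
  "embedding_pair H E \<phi> x0 x1 \<longleftrightarrow>
     inj_graph_hom H E \<phi> x0 \<and> inj_graph_hom H E \<phi> x1 \<and> x0 ` edges H \<inter> x1 ` edges H = {}"

text \<open>A path with range v is a list of edges e1 ... en with r(e1) = v and s(e_i) = r(e_(i+1));
  the empty list represents the vertex v itself (length 0). \<open>is_path_from E v \<mu>\<close> means \<mu> \<in> vE^*.\<close>
fun is_path_from :: "('v, 'e) dgraph \<Rightarrow> 'v \<Rightarrow> 'e list \<Rightarrow> bool" where
  "is_path_from G v [] \<longleftrightarrow> v \<in> verts G"
| "is_path_from G v (e # \<mu>) \<longleftrightarrow> e \<in> edges G \<and> rng G e = v \<and> is_path_from G (src G e) \<mu>"

fun path_src :: "('v, 'e) dgraph \<Rightarrow> 'v \<Rightarrow> 'e list \<Rightarrow> 'v" where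
  "path_src G v [] = v"
| "path_src G v (e # \<mu>) = path_src G (src G e) \<mu>"

text \<open>(m,v)\<cdot>e.  If e = \<xi>^i(h), write m + i = 2n + j with j \<in> {0,1}; then (m,v)\<cdot>e = \<xi>^j(h).\<close>
definition act_edge :: "'he set \<Rightarrow> ('he \<Rightarrow> 'e) \<Rightarrow> ('he \<Rightarrow> 'e) \<Rightarrow> int \<Rightarrow> 'e \<Rightarrow> 'e" where
  "act_edge HE x0 x1 m e =
     (if e \<in> x0 ` HE then
        (let h = inv_into HE x0 e in if m mod 2 = 0 then x0 h else x1 h)
      else if e \<in> x1 ` HE then
        (let h = inv_into HE x1 e in if (m + 1) mod 2 = 0 then x0 h else x1 h)
      else e)"

text \<open>Integer part of the restriction (m,v)|_e = (n, s(e)), where m + i = 2n + j.\<close>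
definition res_edge :: "'he set \<Rightarrow> ('he \<Rightarrow> 'e) \<Rightarrow> ('he \<Rightarrow> 'e) \<Rightarrow> int \<Rightarrow> 'e \<Rightarrow> int" where
  "res_edge HE x0 x1 m e =
     (if e \<in> x0 ` HE then m div 2
      else if e \<in> x1 ` HE then (m + 1) div 2
      else 0)"

text \<open>Extension to paths: g\<cdot>(e\<nu>) = (g\<cdot>e)(g|_e\<cdot>\<nu>), g|_(e\<nu>) = (g|_e)|_\<nu>.
  The vertex component of g|_\<mu> is s(\<mu>) (given by path_src).\<close>
fun act_path :: "'he set \<Rightarrow> ('he \<Rightarrow> 'e) \<Rightarrow> ('he \<Rightarrow> 'e) \<Rightarrow> int \<Rightarrow> 'e list \<Rightarrow> 'e list" where
  "act_path HE x0 x1 m [] = []"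
| "act_path HE x0 x1 m (e # \<nu>) =
     act_edge HE x0 x1 m e # act_path HE x0 x1 (res_edge HE x0 x1 m e) \<nu>"

fun res_path :: "'he set \<Rightarrow> ('he \<Rightarrow> 'e) \<Rightarrow> ('he \<Rightarrow> 'e) \<Rightarrow> int \<Rightarrow> 'e list \<Rightarrow> int" where
  "res_path HE x0 x1 m [] = m"
| "res_path HE x0 x1 m (e # \<nu>) = res_path HE x0 x1 (res_edge HE x0 x1 m e) \<nu>"

text \<open>Two elements of \<int> \<times> E^0 are identified in G_\<xi> iff they have the same unit v and
  act identically on vE^* (equivalently, their quotient acts trivially).\<close>
definition Gxi_rel :: "('v, 'e) dgraph \<Rightarrow> 'he set \<Rightarrow> ('he \<Rightarrow> 'e) \<Rightarrow> ('he \<Rightarrow> 'e) \<Rightarrow>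
    ((int \<times> 'v) \<times> (int \<times> 'v)) set" where
  "Gxi_rel E HE x0 x1 = {((m, v), (n, w)). v \<in> verts E \<and> w = v \<and>
       (\<forall>\<mu>. is_path_from E v \<mu> \<longrightarrow> act_path HE x0 x1 m \<mu> = act_path HE x0 x1 n \<mu>)}"

definition Gxi :: "('v, 'e) dgraph \<Rightarrow> 'he set \<Rightarrow> ('he \<Rightarrow> 'e) \<Rightarrow> ('he \<Rightarrow> 'e) \<Rightarrow> (int \<times> 'v) set set" where
  "Gxi E HE x0 x1 = (UNIV \<times> verts E) // Gxi_rel E HE x0 x1"

definition gres :: "('v, 'e) dgraph \<Rightarrow> 'he set \<Rightarrow> ('he \<Rightarrow> 'e) \<Rightarrow> ('he \<Rightarrow> 'e) \<Rightarrow>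
    int \<Rightarrow> 'v \<Rightarrow> 'e list \<Rightarrow> (int \<times> 'v) set" where
  "gres E HE x0 x1 m v \<mu> =
     Gxi_rel E HE x0 x1 `` {(res_path HE x0 x1 m \<mu>, path_src E v \<mu>)}"

text \<open>Contracting and regular, stated for G_\<xi>: each element g of G_\<xi> is represented by
  some (m,v) with v \<in> E^0; g\<cdot>\<mu> and g|_\<mu> are computed on any representative
  (they are independent of the representative).\<close>
definition Gxi_contracting :: "('v, 'e) dgraph \<Rightarrow> 'he set \<Rightarrow> ('he \<Rightarrow> 'e) \<Rightarrow> ('he \<Rightarrow> 'e) \<Rightarrow> bool" where
  "Gxi_contracting E HE x0 x1 \<longleftrightarrow>
     (\<exists>F. F \<subseteq> Gxi E HE x0 x1 \<and> finite F \<and>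
        (\<forall>m v. v \<in> verts E \<longrightarrow>
           (\<exists>n. \<forall>\<mu>. is_path_from E v \<mu> \<and> n \<le> length \<mu> \<longrightarrow> gres E HE x0 x1 m v \<mu> \<in> F)))"

definition Gxi_regular :: "('v, 'e) dgraph \<Rightarrow> 'he set \<Rightarrow> ('he \<Rightarrow> 'e) \<Rightarrow> ('he \<Rightarrow> 'e) \<Rightarrow> bool" where
  "Gxi_regular E HE x0 x1 \<longleftrightarrow>
     (\<forall>m v. v \<in> verts E \<longrightarrow>
        (\<exists>K::nat. \<forall>\<mu>. is_path_from E v \<mu> \<and> act_path HE x0 x1 m \<mu> = \<mu> \<and> K \<le> length \<mu> \<longrightarrow>
            gres E HE x0 x1 m v \<mu> = Gxi_rel E HE x0 x1 `` {(0, path_src E v \<mu>)}))"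

end

theory Submission
  imports Defs
begin

text \<open>The integer part of a restriction (m,v)|_e is m div 2, (m + 1) div 2 or 0, so its absolute
  value drops by at least one per edge until it reaches {-1, 0, 1}; hence after |m| edges every
  restriction lies among the finitely many classes of {-1, 0, 1} \<times> E^0. If moreover e is fixed
  and e = \<xi>^i(h), then (m,v)\<cdot>e = \<xi>^j(h) with m + i = 2n + j forces j = i because the edge
  images of \<xi>^0 and \<xi>^1 are disjoint; so m is even and the restriction is exactly m/2. Along a
  fixed path the integer part therefore reaches 0 after |m| edges, which is regularity.\<close>

lemma path_src_in_verts:
  "is_path_from E v \<mu> \<Longrightarrow> path_src E v \<mu> \<in> verts E"
  by (induction \<mu> arbitrary: v) auto

lemma abs_res_edge_le:
  "\<bar>res_edge HE x0 x1 m e\<bar> \<le> max 1 (\<bar>m\<bar> - 1)"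
  unfolding res_edge_def by (auto simp: abs_if)

lemma abs_res_path_le:
  "\<bar>res_path HE x0 x1 m \<mu>\<bar> \<le> max 1 (\<bar>m\<bar> - int (length \<mu>))"
proof (induction \<mu> arbitrary: m)
  case Nil
  then show ?case by simp
next
  case (Cons e \<nu>)
  have "\<bar>res_path HE x0 x1 (res_edge HE x0 x1 m e) \<nu>\<bar>
      \<le> max 1 (\<bar>res_edge HE x0 x1 m e\<bar> - int (length \<nu>))"
    by (rule Cons.IH)
  also have "\<dots> \<le> max 1 (\<bar>m\<bar> - int (length (e # \<nu>)))"
    using abs_res_edge_le[of HE x0 x1 m e] by auto
  finally show ?case by simp
qed

lemma fixed_edge_even_res_edge:
  assumes disj: "x0 ` HE \<inter> x1 ` HE = {}"
    and fixed: "act_edge HE x0 x1 m e = e"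
    and e: "e \<in> x0 ` HE \<union> x1 ` HE"
  shows "even m" and "res_edge HE x0 x1 m e = m div 2"
proof -
  have "m mod 2 = 0 \<and> res_edge HE x0 x1 m e = m div 2"
  proof (cases "e \<in> x0 ` HE")
    case True
    let ?h = "inv_into HE x0 e"
    have act: "act_edge HE x0 x1 m e = (if m mod 2 = 0 then x0 ?h else x1 ?h)"
      using True by (simp add: act_edge_def Let_def)
    have "x1 ?h \<notin> x0 ` HE"
      using True disj by (blast intro: inv_into_into)
    with True fixed act have "m mod 2 = 0"
      by (metis (full_types))
    moreover have "res_edge HE x0 x1 m e = m div 2"
      using True by (simp add: res_edge_def)
    ultimately show ?thesis by simp
  next
    case False
    with e have x1e: "e \<in> x1 ` HE" by blast
    let ?h = "inv_into HE x1 e"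
    have act: "act_edge HE x0 x1 m e = (if (m + 1) mod 2 = 0 then x0 ?h else x1 ?h)"
      using False x1e by (simp add: act_edge_def Let_def)
    have "x0 ?h \<in> x0 ` HE"
      using x1e by (blast intro: inv_into_into)
    with False fixed act have "(m + 1) mod 2 \<noteq> 0"
      by (metis (full_types))
    then have "m mod 2 = 0"
      by presburger
    moreover have "res_edge HE x0 x1 m e = (m + 1) div 2"
      using False x1e by (simp add: res_edge_def)
    ultimately show ?thesis
      by presburger
  qed
  then show "even m" and "res_edge HE x0 x1 m e = m div 2"
    by (simp_all add: even_iff_mod_2_eq_zero)
qed

lemma abs_res_edge_le_if_fixed:
  assumes "x0 ` HE \<inter> x1 ` HE = {}" and "act_edge HE x0 x1 m e = e"
  shows "\<bar>res_edge HE x0 x1 m e\<bar> \<le> max 0 (\<bar>m\<bar> - 1)"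
proof (cases "e \<in> x0 ` HE \<union> x1 ` HE")
  case True
  then have "even m" and "res_edge HE x0 x1 m e = m div 2"
    using fixed_edge_even_res_edge[OF assms] by blast+
  then show ?thesis
    by (auto elim!: evenE simp: abs_if)
next
  case False
  then show ?thesis
    by (simp add: res_edge_def)
qed

lemma abs_res_path_le_if_fixed:
  assumes disj: "x0 ` HE \<inter> x1 ` HE = {}"
  shows "act_path HE x0 x1 m \<mu> = \<mu> \<Longrightarrow>
    \<bar>res_path HE x0 x1 m \<mu>\<bar> \<le> max 0 (\<bar>m\<bar> - int (length \<mu>))"
proof (induction \<mu> arbitrary: m)
  case Nil
  then show ?case by simp
next
  case (Cons e \<nu>)
  have fixed_e: "act_edge HE x0 x1 m e = e"
    and fixed_\<nu>: "act_path HE x0 x1 (res_edge HE x0 x1 m e) \<nu> = \<nu>"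
    using Cons.prems by auto
  have "\<bar>res_path HE x0 x1 (res_edge HE x0 x1 m e) \<nu>\<bar>
      \<le> max 0 (\<bar>res_edge HE x0 x1 m e\<bar> - int (length \<nu>))"
    by (rule Cons.IH[OF fixed_\<nu>])
  also have "\<dots> \<le> max 0 (\<bar>m\<bar> - int (length (e # \<nu>)))"
    using abs_res_edge_le_if_fixed[OF disj fixed_e] by auto
  finally show ?case by simp
qed

lemma Gxi_contracting_if_finite_verts:
  assumes "finite (verts E)"
  shows "Gxi_contracting E HE x0 x1"
  unfolding Gxi_contracting_def
proof (intro exI[of _ "(\<lambda>p. Gxi_rel E HE x0 x1 `` {p}) ` ({-1, 0, 1} \<times> verts E)"] conjI allI impI)
  let ?F = "(\<lambda>p. Gxi_rel E HE x0 x1 `` {p}) ` ({-1, 0, 1} \<times> verts E)"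
  show "?F \<subseteq> Gxi E HE x0 x1"
    unfolding Gxi_def by (intro image_subsetI quotientI) blast
  show "finite ?F"
    using assms by simp
  fix m v
  show "\<exists>n. \<forall>\<mu>. is_path_from E v \<mu> \<and> n \<le> length \<mu> \<longrightarrow> gres E HE x0 x1 m v \<mu> \<in> ?F"
  proof (intro exI[of _ "nat \<bar>m\<bar>"] allI impI)
    fix \<mu>
    assume path: "is_path_from E v \<mu> \<and> nat \<bar>m\<bar> \<le> length \<mu>"
    then have "(res_path HE x0 x1 m \<mu>, path_src E v \<mu>) \<in> {-1, 0, 1} \<times> verts E"
      using abs_res_path_le[of HE x0 x1 m \<mu>] path_src_in_verts by auto
    then show "gres E HE x0 x1 m v \<mu> \<in> ?F"
      unfolding gres_def by (rule imageI)
  qed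
qed

lemma Gxi_regular_if_disjoint:
  assumes "x0 ` HE \<inter> x1 ` HE = {}"
  shows "Gxi_regular E HE x0 x1"
  unfolding Gxi_regular_def
proof (intro allI impI)
  fix m v
  show "\<exists>K::nat. \<forall>\<mu>. is_path_from E v \<mu> \<and> act_path HE x0 x1 m \<mu> = \<mu> \<and> K \<le> length \<mu> \<longrightarrow>
      gres E HE x0 x1 m v \<mu> = Gxi_rel E HE x0 x1 `` {(0, path_src E v \<mu>)}"
  proof (intro exI[of _ "nat \<bar>m\<bar>"] allI impI)
    fix \<mu>
    assume "is_path_from E v \<mu> \<and> act_path HE x0 x1 m \<mu> = \<mu> \<and> nat \<bar>m\<bar> \<le> length \<mu>"
    then have "res_path HE x0 x1 m \<mu> = 0"
      using abs_res_path_le_if_fixed[OF assms, of m \<mu>] by auto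
    then show "gres E HE x0 x1 m v \<mu> = Gxi_rel E HE x0 x1 `` {(0, path_src E v \<mu>)}"
      unfolding gres_def by simp
  qed
qed

theorem proposition4p1:
  fixes E :: "('v, 'e) dgraph" and H :: "('hv, 'he) dgraph"
    and \<phi> :: "'hv \<Rightarrow> 'v" and x0 x1 :: "'he \<Rightarrow> 'e"
  assumes "finite_dgraph E" and "finite_dgraph H"
    and "embedding_pair H E \<phi> x0 x1"
  shows "Gxi_contracting E (edges H) x0 x1 \<and> Gxi_regular E (edges H) x0 x1"
proof
  show "Gxi_contracting E (edges H) x0 x1"
    using assms(1) by (intro Gxi_contracting_if_finite_verts) (simp add: finite_dgraph_def)
  show "Gxi_regular E (edges H) x0 x1"
    using assms(3) by (intro Gxi_regular_if_disjoint) (simp add: embedding_pair_def)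
qed

end
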